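(* In the supersample setting described in the context, assume the loss takes values in $[0,1]$. Then \[ \left|\mathrm{Err}\right| \leq\frac{1}{n}\sum_{i=1}^n\mathbb E_{U_i}\!\left[\mathbb{W}(P_{\Delta L_i|U_i},P_{\Delta L_i})\right]. \]
   Context: Let $\mathcal Z=\mathcal X\times\mathcal Y$ and let $\mu$ be a distribution on $\mathcal Z$. A (possibly randomized) learning algorithm $\mathcal A$ maps a training sample in $\mathcal Z^n$ to a hypothesis $W\in\mathcal W$, and $\ell:\mathcal W\times\mathcal Z\to[0,\infty)$ is a loss. For $S=(Z_1,\dots,Z_n)\sim\mu^{n}$ and $W\sim P_{W|S}$, let $L_\mu=\mathbb E_W\mathbb E_{Z'\sim\mu}[\ell(W,Z')]$ (with $Z'$ independent of $(S,W)$), $L_n=\mathbb E_{W,S}[\frac1n\sum_i\ell(W,Z_i)]$, $\mathrm{Err}=L_\mu-L_n$. Supersample: $\widetilde Z=(\widetilde Z_{i,j})_{i\in\{1,\dots,n\},j\in\{0,1\}}$ with i.i.d. entries of law $\mu$; $U=(U_1,\dots,U_n)$ uniform on $\{0,1\}^n$, independent of $\widetilde Z$; $W=\mathcal A(\widetilde Z_U)$ with $\widetilde Z_U=(\widetilde Z_{1,U_1},\dots,\widetilde Z_{n,U_n})$. Put $L_{i,j}=\ell(W,\widetilde Z_{i,j})$ and $\Delta L_i=L_{i,1}-L_{i,0}$. $\mathbb W(P,Q)=\inf_{\gamma\in\Gamma(P,Q)}\int|x-x'|\,d\gamma(x,x')$ is the order-one Wasserstein distance on $\mathbb R$ (with the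 metric $|x-x'|$), where $\Gamma(P,Q)$ is the set of couplings of $P$ and $Q$. *)

theory Defs
  imports "HOL-Probability.Probability"
begin

definition coupling :: "real measure \<Rightarrow> real measure \<Rightarrow> (real \<times> real) measure \<Rightarrow> bool" where
  "coupling P Q \<gamma> \<longleftrightarrow> prob_space \<gamma> \<and> sets \<gamma> = sets (borel \<Otimes>\<^sub>M borel)
     \<and> distr \<gamma> borel fst = P \<and> distr \<gamma> borel snd = Q"

definition wasserstein1 :: "real measure \<Rightarrow> real measure \<Rightarrow> ennreal" where
  "wasserstein1 P Q = (INF \<gamma> \<in> {\<gamma>. coupling P Q \<gamma>}. \<integral>\<^sup>+ x. ennreal \<bar>fst x - snd x\<bar> \<partial>\<gamma>)"

text \<open>Training sample S = (Z_1,...,Z_n) ~ mu^n, indices 0..n-1.\<close>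
definition sample_space :: "nat \<Rightarrow> 'z measure \<Rightarrow> (nat \<Rightarrow> 'z) measure" where
  "sample_space n M = PiM {..<n} (\<lambda>_. M)"

text \<open>Supersample Z~ = (Z~_{i,j}), i < n, j in {0,1} encoded as bool (False = 0, True = 1).\<close>
definition super_space :: "nat \<Rightarrow> 'z measure \<Rightarrow> (nat \<times> bool \<Rightarrow> 'z) measure" where
  "super_space n M = PiM ({..<n} \<times> (UNIV :: bool set)) (\<lambda>_. M)"

definition mask_space :: "nat \<Rightarrow> (nat \<Rightarrow> bool) measure" where
  "mask_space n = PiM {..<n} (\<lambda>_. measure_pmf (pmf_of_set (UNIV :: bool set)))"

definition select :: "nat \<Rightarrow> (nat \<times> bool \<Rightarrow> 'z) \<Rightarrow> (nat \<Rightarrow> bool) \<Rightarrow> (nat \<Rightarrow> 'z)" where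
  "select n zt u = (\<lambda>i\<in>{..<n}. zt (i, u i))"

text \<open>Joint law of (Z~, U, W) with W ~ A(Z~_U); A is a Markov kernel (randomized algorithm).\<close>
definition supersample_joint ::
  "nat \<Rightarrow> 'z measure \<Rightarrow> 'w measure \<Rightarrow> ((nat \<Rightarrow> 'z) \<Rightarrow> 'w measure)
     \<Rightarrow> ((nat \<times> bool \<Rightarrow> 'z) \<times> (nat \<Rightarrow> bool) \<times> 'w) measure" where
  "supersample_joint n M Wsp A =
     bind (super_space n M \<Otimes>\<^sub>M mask_space n)
       (\<lambda>(zt, u). distr (A (select n zt u)) (super_space n M \<Otimes>\<^sub>M mask_space n \<Otimes>\<^sub>M Wsp)
                    (\<lambda>w. (zt, u, w)))"

definition pop_risk :: "nat \<Rightarrow> 'z measure \<Rightarrow> ((nat \<Rightarrow> 'z) \<Rightarrow> 'w measure) \<Rightarrow> ('w \<Rightarrow> 'z \<Rightarrow> real) \<Rightarrow> real" where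
  "pop_risk n M A loss = (\<integral> s. (\<integral> w. (\<integral> z. loss w z \<partial>M) \<partial>(A s)) \<partial>(sample_space n M))"

definition emp_risk :: "nat \<Rightarrow> 'z measure \<Rightarrow> ((nat \<Rightarrow> 'z) \<Rightarrow> 'w measure) \<Rightarrow> ('w \<Rightarrow> 'z \<Rightarrow> real) \<Rightarrow> real" where
  "emp_risk n M A loss = (\<integral> s. (\<integral> w. (\<Sum>i<n. loss w (s i)) / real n \<partial>(A s)) \<partial>(sample_space n M))"

definition gen_error :: "nat \<Rightarrow> 'z measure \<Rightarrow> ((nat \<Rightarrow> 'z) \<Rightarrow> 'w measure) \<Rightarrow> ('w \<Rightarrow> 'z \<Rightarrow> real) \<Rightarrow> real" where
  "gen_error n M A loss = pop_risk n M A loss - emp_risk n M A loss"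

definition delta_loss :: "('w \<Rightarrow> 'z \<Rightarrow> real) \<Rightarrow> nat
     \<Rightarrow> (nat \<times> bool \<Rightarrow> 'z) \<times> (nat \<Rightarrow> bool) \<times> 'w \<Rightarrow> real" where
  "delta_loss loss i x = (case x of (zt, u, w) \<Rightarrow> loss w (zt (i, True)) - loss w (zt (i, False)))"

definition mask_coord :: "nat \<Rightarrow> (nat \<times> bool \<Rightarrow> 'z) \<times> (nat \<Rightarrow> bool) \<times> 'w \<Rightarrow> bool" where
  "mask_coord i x = fst (snd x) i"

end

theory Submission
  imports Defs
begin


lemma integral_measurable_subprob_algebra2:
  fixes f :: "'a \<Rightarrow> 'b \<Rightarrow> real"
  assumes f[measurable]: "(\<lambda>(x, y). f x y) \<in> borel_measurable (M \<Otimes>\<^sub>M N)"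
    and L[measurable]: "L \<in> M \<rightarrow>\<^sub>M subprob_algebra N"
  shows "(\<lambda>x. integral\<^sup>L (L x) (f x)) \<in> borel_measurable M"
proof -
  note measurable_distr2[measurable]
  have "(\<lambda>x. integral\<^sup>L (distr (L x) (M \<Otimes>\<^sub>M N) (\<lambda>y. (x, y))) (\<lambda>(x, y). f x y)) \<in> borel_measurable M"
    by measurable
  then show ?thesis
    by (rule measurable_cong[THEN iffD1, rotated])
       (simp add: integral_distr subprob_measurableD(2)[OF L] measurable_Pair1'
         cong: measurable_cong_sets)
qed

lemma (in prob_space) integrable_bounded:
  fixes f :: "'a \<Rightarrow> real"
  assumes "f \<in> borel_measurable M" and "\<And>x. x \<in> space M \<Longrightarrow> \<bar>f x\<bar> \<le> C"
  shows "integrable M f"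
  using assms by (intro integrable_const_bound[where B = C]) auto

lemma (in prob_space) abs_integral_le_bound:
  fixes f :: "'a \<Rightarrow> real"
  assumes "f \<in> borel_measurable M" and "\<And>x. x \<in> space M \<Longrightarrow> \<bar>f x\<bar> \<le> C"
  shows "\<bar>\<integral>x. f x \<partial>M\<bar> \<le> C"
proof -
  have "\<bar>\<integral>x. f x \<partial>M\<bar> \<le> (\<integral>x. \<bar>f x\<bar> \<partial>M)"
    by (rule integral_abs_bound)
  also have "\<dots> \<le> C"
    using assms by (intro integral_le_const integrable_abs integrable_bounded) auto
  finally show ?thesis .
qed

lemma integral_pair_bounded:
  fixes f :: "'a \<Rightarrow> 'b \<Rightarrow> real"
  assumes "prob_space M1" and "prob_space M2"
    and f[measurable]: "(\<lambda>(x, y). f x y) \<in> borel_measurable (M1 \<Otimes>\<^sub>M M2)"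
    and bound: "\<And>x y. x \<in> space M1 \<Longrightarrow> y \<in> space M2 \<Longrightarrow> \<bar>f x y\<bar> \<le> C"
  shows "(\<integral>z. f (fst z) (snd z) \<partial>(M1 \<Otimes>\<^sub>M M2)) = (\<integral>x. \<integral>y. f x y \<partial>M2 \<partial>M1)"
    and "(\<integral>x. \<integral>y. f x y \<partial>M2 \<partial>M1) = (\<integral>y. \<integral>x. f x y \<partial>M1 \<partial>M2)"
proof -
  interpret pair_prob_space M1 M2
    using assms by (simp add: pair_prob_space_def pair_sigma_finite_def prob_space_imp_sigma_finite)
  have int: "integrable (M1 \<Otimes>\<^sub>M M2) (\<lambda>(x, y). f x y)"
    using bound by (intro P.integrable_bounded[where C = C]) (auto simp: space_pair_measure)
  show "(\<integral>z. f (fst z) (snd z) \<partial>(M1 \<Otimes>\<^sub>M M2)) = (\<integral>x. \<integral>y. f x y \<partial>M2 \<partial>M1)"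
    using integral_fst'[OF int] by (simp add: case_prod_beta')
  show "(\<integral>x. \<integral>y. f x y \<partial>M2 \<partial>M1) = (\<integral>y. \<integral>x. f x y \<partial>M1 \<partial>M2)"
    by (rule Fubini_integral[OF int, symmetric])
qed

lemma integral_bind_distr_kernel:
  fixes f :: "'c \<Rightarrow> real"
  assumes K: "prob_space K" and N[measurable]: "N \<in> K \<rightarrow>\<^sub>M prob_algebra W"
    and g[measurable]: "(\<lambda>(x, w). g x w) \<in> K \<Otimes>\<^sub>M W \<rightarrow>\<^sub>M \<Omega>"
    and f[measurable]: "f \<in> borel_measurable \<Omega>" and bound: "\<And>y. y \<in> space \<Omega> \<Longrightarrow> \<bar>f y\<bar> \<le> C"
  shows "(\<integral>y. f y \<partial>(K \<bind> (\<lambda>x. distr (N x) \<Omega> (g x)))) = (\<integral>x. \<integral>w. f (g x w) \<partial>N x \<partial>K)"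
proof -
  have kernel: "(\<lambda>x. distr (N x) \<Omega> (g x)) \<in> K \<rightarrow>\<^sub>M prob_algebra \<Omega>"
    by measurable
  have N_x: "prob_space (N x)" "sets (N x) = sets W" if "x \<in> space K" for x
    using measurable_space[OF N that] by (auto simp: space_prob_algebra)
  have "(\<integral>y. f y \<partial>(K \<bind> (\<lambda>x. distr (N x) \<Omega> (g x)))) = (\<integral>x. \<integral>y. f y \<partial>distr (N x) \<Omega> (g x) \<partial>K)"
  proof (rule integral_bind[OF f bound measurable_prob_algebraD[OF kernel]])
    show "finite_measure K"
      using K by (rule prob_space.finite_measure)
    show "AE x in K. emeasure (distr (N x) \<Omega> (g x)) (space (distr (N x) \<Omega> (g x))) \<le> ennreal 1"
      using measurable_space[OF kernel]
      by (intro AE_I2) (metis (no_types, lifting) ennreal_1 mem_Collect_eq order_refl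
          prob_space.emeasure_space_1 space_prob_algebra)
  qed
  also have "\<dots> = (\<integral>x. \<integral>w. f (g x w) \<partial>N x \<partial>K)"
    using N_x
    by (intro Bochner_Integration.integral_cong refl integral_distr)
       (auto simp: measurable_Pair1' cong: measurable_cong_sets)
  finally show ?thesis .
qed

lemma distr_pair_snd:
  assumes "prob_space M1" and "prob_space M2"
  shows "distr (M1 \<Otimes>\<^sub>M M2) M2 snd = M2"
proof -
  interpret pair_sigma_finite M1 M2
    using assms by (simp add: pair_sigma_finite_def prob_space_imp_sigma_finite)
  interpret M1: prob_space M1 by fact
  have "distr (M1 \<Otimes>\<^sub>M M2) M2 snd = distr (distr (M2 \<Otimes>\<^sub>M M1) (M1 \<Otimes>\<^sub>M M2) (\<lambda>(x, y). (y, x))) M2 snd"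
    by (simp only: distr_pair_swap[symmetric])
  also have "\<dots> = distr (M2 \<Otimes>\<^sub>M M1) M2 fst"
    by (subst distr_distr) (auto simp: comp_def split_beta' intro: distr_cong)
  also have "\<dots> = M2"
    by (rule M1.distr_pair_fst)
  finally show ?thesis .
qed

lemma abs_mean_diff_le_wasserstein1:
  assumes "integrable P (\<lambda>x. x)" and "integrable Q (\<lambda>x. x)"
  shows "ennreal \<bar>(\<integral>x. x \<partial>P) - (\<integral>x. x \<partial>Q)\<bar> \<le> wasserstein1 P Q"
  unfolding wasserstein1_def
proof (rule INF_greatest)
  fix \<gamma> assume "\<gamma> \<in> {\<gamma>. coupling P Q \<gamma>}"
  then have sets_\<gamma>: "sets \<gamma> = sets (borel \<Otimes>\<^sub>M borel)"
    and P: "distr \<gamma> borel fst = P" and Q: "distr \<gamma> borel snd = Q"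
    by (auto simp: coupling_def)
  have fst: "fst \<in> \<gamma> \<rightarrow>\<^sub>M borel" and snd: "snd \<in> \<gamma> \<rightarrow>\<^sub>M borel"
    using measurable_cong_sets[OF sets_\<gamma> refl] by auto
  have int_fst: "integrable \<gamma> (\<lambda>z. fst z :: real)"
    using assms(1) unfolding P[symmetric] by (subst (asm) integrable_distr_eq[OF fst]) auto
  have int_snd: "integrable \<gamma> (\<lambda>z. snd z :: real)"
    using assms(2) unfolding Q[symmetric] by (subst (asm) integrable_distr_eq[OF snd]) auto
  note int = int_fst int_snd
  have "(\<integral>x. x \<partial>P) = (\<integral>z. fst z \<partial>\<gamma>)" "(\<integral>x. x \<partial>Q) = (\<integral>z. snd z \<partial>\<gamma>)"
    unfolding P[symmetric] Q[symmetric] by (subst integral_distr; simp add: fst snd)+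
  then have "\<bar>(\<integral>x. x \<partial>P) - (\<integral>x. x \<partial>Q)\<bar> = \<bar>\<integral>z. fst z - snd z \<partial>\<gamma>\<bar>"
    using int by simp
  also have "\<dots> \<le> (\<integral>z. \<bar>fst z - snd z\<bar> \<partial>\<gamma>)"
    using integral_abs_bound[of \<gamma> "\<lambda>z. fst z - snd z"] by simp
  finally have "ennreal \<bar>(\<integral>x. x \<partial>P) - (\<integral>x. x \<partial>Q)\<bar> \<le> ennreal (\<integral>z. \<bar>fst z - snd z\<bar> \<partial>\<gamma>)"
    by (rule ennreal_leI)
  also have "\<dots> = (\<integral>\<^sup>+ z. ennreal \<bar>fst z - snd z\<bar> \<partial>\<gamma>)"
    using int by (intro nn_integral_eq_integral[symmetric]) auto
  finally show "ennreal \<bar>(\<integral>x. x \<partial>P) - (\<integral>x. x \<partial>Q)\<bar> \<le> (\<integral>\<^sup>+ z. ennreal \<bar>fst z - snd z\<bar> \<partial>\<gamma>)" .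
qed

lemma abs_integral_fair_sign_le_wasserstein1:
  fixes D :: "'a \<Rightarrow> real" and U :: "'a \<Rightarrow> bool"
  assumes "prob_space J" and int_D: "integrable J D"
    and U[measurable]: "U \<in> J \<rightarrow>\<^sub>M count_space UNIV"
    and fair: "distr J (count_space UNIV) U = measure_pmf (pmf_of_set UNIV)"
  shows "ennreal \<bar>\<integral>x. (if U x then - D x else D x) \<partial>J\<bar> \<le>
    (\<integral>\<^sup>+ b. wasserstein1 (distr (uniform_measure J {x \<in> space J. U x = b}) borel D) (distr J borel D)
      \<partial>distr J (count_space UNIV) U)"
proof -
  interpret prob_space J by fact
  have D[measurable]: "D \<in> borel_measurable J"
    using int_D by (rule borel_measurable_integrable)
  define E where "E b = {x \<in> space J. U x = b}" for b
  define I where "I b = (\<integral>x. D x * indicator (E b) x \<partial>J)" for b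
  define W where "W b = wasserstein1 (distr (uniform_measure J (E b)) borel D) (distr J borel D)" for b
  have E[measurable]: "E b \<in> sets J" for b
    unfolding E_def by measurable
  have int_DE: "integrable J (\<lambda>x. D x * indicator (E b) x)" for b
    using int_D by (rule integrable_real_mult_indicator[OF E])
  have prob_E: "emeasure J (E b) = ennreal (1 / 2)" for b
  proof -
    have "emeasure J (E b) = emeasure (distr J (count_space UNIV) U) {b}"
      by (subst emeasure_distr) (auto simp: E_def vimage_def Int_def conj_commute)
    also have "\<dots> = ennreal (1 / 2)"
      unfolding fair by (simp add: emeasure_pmf_of_set UNIV_bool)
    finally show ?thesis .
  qed
  have mean: "(\<integral>x. x \<partial>distr J borel D) = I True + I False"
  proof -
    have "(\<integral>x. x \<partial>distr J borel D) = (\<integral>x. D x * indicator (E True) x + D x * indicator (E False) x \<partial>J)"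
      by (subst integral_distr) (auto simp: E_def indicator_def intro!: Bochner_Integration.integral_cong)
    also have "\<dots> = I True + I False"
      unfolding I_def by (rule Bochner_Integration.integral_add[OF int_DE int_DE])
    finally show ?thesis .
  qed
  have uniform_E: "uniform_measure J (E b) = density J (\<lambda>x. ennreal (2 * indicator (E b) x))" for b
    unfolding uniform_measure_def prob_E
    using divide_ennreal[of 1 "1 / 2"] by (intro arg_cong[where f = "density J"] ext) (simp split: split_indicator)
  have int_cond: "integrable (distr (uniform_measure J (E b)) borel D) (\<lambda>x. x)" for b
    using integrable_mult_right[OF int_DE, of 2]
    by (subst integrable_distr_eq) (auto simp: uniform_E integrable_density mult_ac)
  have cond_mean: "(\<integral>x. x \<partial>distr (uniform_measure J (E b)) borel D) = 2 * I b" for b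
    unfolding I_def integral_mult_right_zero[symmetric]
    by (subst integral_distr) (auto simp: uniform_E integral_density mult_ac)
  have dist: "ennreal \<bar>2 * I b - (I True + I False)\<bar> \<le> W b" for b
    unfolding W_def cond_mean[symmetric] mean[symmetric]
    using int_cond int_D by (intro abs_mean_diff_le_wasserstein1) (auto simp: integrable_distr_eq)
  have "(\<integral>x. (if U x then - D x else D x) \<partial>J) = (\<integral>x. D x * indicator (E False) x - D x * indicator (E True) x \<partial>J)"
    by (rule Bochner_Integration.integral_cong) (auto simp: E_def indicator_def)
  also have "\<dots> = I False - I True"
    unfolding I_def by (rule Bochner_Integration.integral_diff[OF int_DE int_DE])
  finally have signed: "(\<integral>x. (if U x then - D x else D x) \<partial>J) = I False - I True" .
  have "\<bar>I False - I True\<bar> = (\<bar>2 * I True - (I True + I False)\<bar> + \<bar>2 * I False - (I True + I False)\<bar>) / 2"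
    by (simp add: abs_minus_commute)
  then have "ennreal \<bar>\<integral>x. (if U x then - D x else D x) \<partial>J\<bar>
      = ennreal (\<bar>2 * I True - (I True + I False)\<bar> + \<bar>2 * I False - (I True + I False)\<bar>) / 2"
    unfolding signed by (simp only: ennreal_divide_numeral add_nonneg_nonneg abs_ge_zero)
  also have "\<dots> = (ennreal \<bar>2 * I True - (I True + I False)\<bar> + ennreal \<bar>2 * I False - (I True + I False)\<bar>) / 2"
    by (simp add: ennreal_plus)
  also have "\<dots> \<le> (W True + W False) / 2"
    by (intro divide_right_mono_ennreal add_mono dist)
  also have "\<dots> = (\<integral>\<^sup>+ b. W b \<partial>distr J (count_space UNIV) U)"
    unfolding fair by (simp add: nn_integral_pmf_of_set UNIV_bool add.commute)
  finally show ?thesis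
    unfolding W_def E_def .
qed

lemma prob_space_sample_space: "prob_space M \<Longrightarrow> prob_space (sample_space n M)"
  unfolding sample_space_def by (rule prob_space_PiM)

lemma prob_space_super_space: "prob_space M \<Longrightarrow> prob_space (super_space n M)"
  unfolding super_space_def by (rule prob_space_PiM)

lemma prob_space_mask_space: "prob_space (mask_space n)"
  unfolding mask_space_def by (intro prob_space_PiM prob_space_measure_pmf)

lemma measurable_select_mask[measurable]:
  "(\<lambda>zt. select n zt u) \<in> super_space n M \<rightarrow>\<^sub>M sample_space n M"
  unfolding select_def super_space_def sample_space_def by measurable

lemma measurable_select[measurable]:
  "(\<lambda>(zt, u). select n zt u) \<in> super_space n M \<Otimes>\<^sub>M mask_space n \<rightarrow>\<^sub>M sample_space n M"
  unfolding select_def super_space_def mask_space_def sample_space_def by measurable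

lemma measurable_sample_component: "i < n \<Longrightarrow> (\<lambda>s. s i) \<in> sample_space n M \<rightarrow>\<^sub>M M"
  unfolding sample_space_def by measurable

lemma measurable_super_component: "i < n \<Longrightarrow> (\<lambda>zt. zt (i, c)) \<in> super_space n M \<rightarrow>\<^sub>M M"
  unfolding super_space_def by measurable

lemma measurable_mask_component: "i < n \<Longrightarrow> (\<lambda>u. u i) \<in> mask_space n \<rightarrow>\<^sub>M count_space UNIV"
proof -
  assume "i < n"
  then have "(\<lambda>u. u i) \<in> mask_space n \<rightarrow>\<^sub>M measure_pmf (pmf_of_set UNIV)"
    unfolding mask_space_def by (intro measurable_component_singleton) simp
  then show ?thesis
    by (simp only: measurable_cong_sets[OF refl sets_measure_pmf_count_space])
qed
lemma space_sample_spaceD: "s \<in> space (sample_space n M) \<Longrightarrow> i < n \<Longrightarrow> s i \<in> space M"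
  by (auto simp: sample_space_def space_PiM)

lemma space_super_spaceD: "zt \<in> space (super_space n M) \<Longrightarrow> i < n \<Longrightarrow> zt (i, c) \<in> space M"
  by (auto simp: super_space_def space_PiM)

lemma distr_sample_space_component:
  assumes "prob_space M" and "i < n"
  shows "distr (sample_space n M) M (\<lambda>s. s i) = M"
  unfolding sample_space_def by (rule distr_PiM_component) (use assms in auto)

lemma integral_sample_space_mean:
  fixes f :: "'z \<Rightarrow> real"
  assumes M: "prob_space M" and "0 < n" and f: "integrable M f"
  shows "(\<integral>s. (\<Sum>i<n. f (s i)) / real n \<partial>sample_space n M) = (\<integral>z. f z \<partial>M)"
proof -
  have f_meas: "f \<in> borel_measurable M"
    using f by (rule borel_measurable_integrable)
  have component: "integrable (sample_space n M) (\<lambda>s. f (s i))"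
    "(\<integral>s. f (s i) \<partial>sample_space n M) = (\<integral>z. f z \<partial>M)" if "i < n" for i
    using integrable_distr_eq[OF measurable_sample_component[OF that] f_meas]
      integral_distr[OF measurable_sample_component[OF that] f_meas]
    unfolding distr_sample_space_component[OF M that] using f by simp_all
  have "(\<integral>s. (\<Sum>i<n. f (s i)) / real n \<partial>sample_space n M) = (\<Sum>i<n. \<integral>s. f (s i) \<partial>sample_space n M) / real n"
    using component(1) by (simp add: integral_sum)
  also have "\<dots> = (\<integral>z. f z \<partial>M)"
    using component(2) \<open>0 < n\<close> by simp
  finally show ?thesis .
qed

definition interleave :: "nat \<Rightarrow> (nat \<Rightarrow> bool) \<Rightarrow> (nat \<Rightarrow> 'z) \<Rightarrow> (nat \<Rightarrow> 'z) \<Rightarrow> nat \<times> bool \<Rightarrow> 'z" where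
  "interleave n u s s' = (\<lambda>j \<in> {..<n} \<times> UNIV. if snd j = u (fst j) then s (fst j) else s' (fst j))"

lemma select_interleave: "s \<in> space (sample_space n M) \<Longrightarrow> select n (interleave n u s s') u = s"
  by (auto simp: select_def interleave_def sample_space_def space_PiM PiE_def extensional_def)

lemma measurable_interleave[measurable]:
  "(\<lambda>(s, s'). interleave n u s s') \<in> sample_space n M \<Otimes>\<^sub>M sample_space n M \<rightarrow>\<^sub>M super_space n M"
  unfolding split_beta' interleave_def super_space_def
proof (intro measurable_restrict)
  fix j :: "nat \<times> bool" assume "j \<in> {..<n} \<times> UNIV"
  then have j: "fst j < n" by auto
  show "(\<lambda>p. if snd j = u (fst j) then fst p (fst j) else snd p (fst j))
      \<in> sample_space n M \<Otimes>\<^sub>M sample_space n M \<rightarrow>\<^sub>M M"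
  proof (cases "snd j = u (fst j)")
    case True
    then show ?thesis
      using measurable_compose[OF measurable_fst measurable_sample_component[OF j]] by simp
  next
    case False
    then show ?thesis
      using measurable_compose[OF measurable_snd measurable_sample_component[OF j]] by simp
  qed
qed


lemma ball_times_bool: "(\<forall>j\<in>I \<times> (UNIV::bool set). P j) \<longleftrightarrow> (\<forall>i\<in>I. P (i, u i) \<and> P (i, \<not> u i))"
proof safe
  fix i c assume "\<forall>i\<in>I. P (i, u i) \<and> P (i, \<not> u i)" "i \<in> I"
  then show "P (i, c)" by (cases "c = u i") auto
qed auto

lemma interleave_selected: "i < n \<Longrightarrow> interleave n u s s' (i, u i) = s i"
  by (simp add: interleave_def)

lemma interleave_other: "i < n \<Longrightarrow> interleave n u s s' (i, \<not> u i) = s' i"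
  by (simp add: interleave_def)

lemma interleave_in_PiE:
  "interleave n u s s' \<in> Pi\<^sub>E ({..<n} \<times> UNIV) X \<longleftrightarrow> (\<forall>i\<in>{..<n}. s i \<in> X (i, u i) \<and> s' i \<in> X (i, \<not> u i))"
proof -
  have "interleave n u s s' \<in> extensional ({..<n} \<times> UNIV)"
    by (simp add: interleave_def)
  then show ?thesis
    unfolding PiE_iff ball_times_bool[where u = u] by (simp add: interleave_selected interleave_other)
qed

lemma distr_interleave:
  assumes "prob_space M"
  shows "distr (sample_space n M \<Otimes>\<^sub>M sample_space n M) (super_space n M) (\<lambda>(s, s'). interleave n u s s')
    = super_space n M"
  unfolding super_space_def
proof (rule product_sigma_finite.PiM_eqI)
  let ?S = "sample_space n M"
  interpret S: prob_space ?S
    using assms by (rule prob_space_sample_space)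
  interpret product_sigma_finite "\<lambda>_. M"
    using assms by (simp add: product_sigma_finite_def prob_space_imp_sigma_finite)
  show "product_sigma_finite (\<lambda>_. M)" ..
  fix X :: "nat \<times> bool \<Rightarrow> 'a set" assume X: "\<And>j. j \<in> {..<n} \<times> UNIV \<Longrightarrow> X j \<in> sets M"
  have X_space: "x \<in> space M" if "i < n" and "x \<in> X (i, c)" for i c x
    using X[of "(i, c)"] that sets.sets_into_space by auto
  have PiE_sets: "Pi\<^sub>E ({..<n} \<times> UNIV) X \<in> sets (Pi\<^sub>M ({..<n} \<times> UNIV) (\<lambda>_. M))"
    by (rule sets_PiM_I_finite) (use X in auto)
  have sets_selected: "(\<Pi>\<^sub>E i\<in>{..<n}. X (i, c i)) \<in> sets ?S" for c
    unfolding sample_space_def by (rule sets_PiM_I_finite) (use X in auto)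
  have preimage: "(\<lambda>(s, s'). interleave n u s s') -` Pi\<^sub>E ({..<n} \<times> UNIV) X \<inter> space (?S \<Otimes>\<^sub>M ?S)
      = (\<Pi>\<^sub>E i\<in>{..<n}. X (i, u i)) \<times> (\<Pi>\<^sub>E i\<in>{..<n}. X (i, \<not> u i))"
  proof (rule set_eqI)
    fix p :: "(nat \<Rightarrow> 'a) \<times> (nat \<Rightarrow> 'a)"
    obtain s s' where p: "p = (s, s')" by (cases p)
    show "p \<in> (\<lambda>(s, s'). interleave n u s s') -` Pi\<^sub>E ({..<n} \<times> UNIV) X \<inter> space (?S \<Otimes>\<^sub>M ?S)
      \<longleftrightarrow> p \<in> (\<Pi>\<^sub>E i\<in>{..<n}. X (i, u i)) \<times> (\<Pi>\<^sub>E i\<in>{..<n}. X (i, \<not> u i))"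
      unfolding p vimage_def Int_iff mem_Collect_eq prod.case interleave_in_PiE
      by (auto simp: space_pair_measure sample_space_def space_PiM PiE_iff intro: X_space)
  qed
  have "emeasure (distr (?S \<Otimes>\<^sub>M ?S) (Pi\<^sub>M ({..<n} \<times> UNIV) (\<lambda>_. M)) (\<lambda>(s, s'). interleave n u s s'))
      (Pi\<^sub>E ({..<n} \<times> UNIV) X)
    = emeasure ?S (\<Pi>\<^sub>E i\<in>{..<n}. X (i, u i)) * emeasure ?S (\<Pi>\<^sub>E i\<in>{..<n}. X (i, \<not> u i))"
    unfolding emeasure_distr[OF measurable_interleave[of n u M, unfolded super_space_def] PiE_sets] preimage
    by (rule S.emeasure_pair_measure_Times[OF sets_selected sets_selected])
  also have "\<dots> = (\<Prod>i<n. emeasure M (X (i, u i)) * emeasure M (X (i, \<not> u i)))"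
    unfolding sample_space_def prod.distrib by (subst (1 2) emeasure_PiM) (use X in auto)
  also have "\<dots> = (\<Prod>i<n. \<Prod>c\<in>UNIV. emeasure M (X (i, c)))"
  proof (rule prod.cong[OF refl])
    fix i show "emeasure M (X (i, u i)) * emeasure M (X (i, \<not> u i)) = (\<Prod>c\<in>UNIV. emeasure M (X (i, c)))"
      by (cases "u i") (simp_all add: UNIV_bool mult.commute)
  qed
  also have "\<dots> = (\<Prod>j\<in>{..<n} \<times> UNIV. emeasure M (X j))"
    by (rule prod.cartesian_product'[symmetric])
  finally show "emeasure (distr (?S \<Otimes>\<^sub>M ?S) (Pi\<^sub>M ({..<n} \<times> UNIV) (\<lambda>_. M)) (\<lambda>(s, s'). interleave n u s s'))
      (Pi\<^sub>E ({..<n} \<times> UNIV) X) = (\<Prod>j\<in>{..<n} \<times> UNIV. emeasure M (X j))" .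
qed simp_all




definition empirical_loss :: "nat \<Rightarrow> ('w \<Rightarrow> 'z \<Rightarrow> real) \<Rightarrow> (nat \<Rightarrow> 'z) \<Rightarrow> 'w \<Rightarrow> real" where
  "empirical_loss n loss s w = (\<Sum>i<n. loss w (s i)) / real n"

definition heldout_gap :: "('w \<Rightarrow> 'z \<Rightarrow> real) \<Rightarrow> nat \<Rightarrow> (nat \<times> bool \<Rightarrow> 'z) \<times> (nat \<Rightarrow> bool) \<times> 'w \<Rightarrow> real" where
  "heldout_gap loss i x = (if mask_coord i x then - delta_loss loss i x else delta_loss loss i x)"

lemma heldout_gap_interleave:
  "i < n \<Longrightarrow> heldout_gap loss i (interleave n u s s', u, w) = loss w (s' i) - loss w (s i)"
proof -
  assume "i < n"
  then have "interleave n u s s' (i, c) = (if c = u i then s i else s' i)" for c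
    by (simp add: interleave_def)
  then show ?thesis
    by (cases "u i") (simp_all add: heldout_gap_def mask_coord_def delta_loss_def)
qed

locale supersample =
  fixes n :: nat and M :: "'z measure" and Wsp :: "'w measure"
    and A :: "(nat \<Rightarrow> 'z) \<Rightarrow> 'w measure" and loss :: "'w \<Rightarrow> 'z \<Rightarrow> real" and B :: real
  assumes n_pos: "0 < n"
    and M: "prob_space M"
    and A[measurable]: "A \<in> sample_space n M \<rightarrow>\<^sub>M prob_algebra Wsp"
    and loss_measurable[measurable]: "(\<lambda>(w, z). loss w z) \<in> borel_measurable (Wsp \<Otimes>\<^sub>M M)"
    and loss_bounded: "\<And>w z. w \<in> space Wsp \<Longrightarrow> z \<in> space M \<Longrightarrow> \<bar>loss w z\<bar> \<le> B"
begin

lemma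
  assumes "s \<in> space (sample_space n M)"
  shows prob_space_A: "prob_space (A s)" and sets_A: "sets (A s) = sets Wsp"
  using measurable_space[OF A assms] by (auto simp: space_prob_algebra)

lemma measurable_empirical_loss[measurable]:
  "(\<lambda>(s, w). empirical_loss n loss s w) \<in> borel_measurable (sample_space n M \<Otimes>\<^sub>M Wsp)"
  unfolding empirical_loss_def sample_space_def by measurable

lemma empirical_loss_bounded:
  assumes "s \<in> space (sample_space n M)" and "w \<in> space Wsp"
  shows "\<bar>empirical_loss n loss s w\<bar> \<le> B"
proof -
  have "\<bar>\<Sum>i<n. loss w (s i)\<bar> \<le> (\<Sum>i<n. \<bar>loss w (s i)\<bar>)"
    by (rule sum_abs)
  also have "\<dots> \<le> (\<Sum>i<n. B)"
    using assms by (intro sum_mono) (simp add: loss_bounded space_sample_spaceD)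
  finally show ?thesis
    using n_pos by (simp add: empirical_loss_def abs_divide divide_le_eq mult.commute)
qed

lemma measurable_loss_slice: "w \<in> space Wsp \<Longrightarrow> loss w \<in> borel_measurable M"
  using measurable_compose[OF measurable_Pair1'[of w Wsp M] loss_measurable] by simp

lemma measurable_population_loss[measurable]: "(\<lambda>w. \<integral>z. loss w z \<partial>M) \<in> borel_measurable Wsp"
  by (rule sigma_finite_measure.borel_measurable_lebesgue_integral[OF prob_space_imp_sigma_finite[OF M]
        loss_measurable])

lemma population_loss_bounded: "w \<in> space Wsp \<Longrightarrow> \<bar>\<integral>z. loss w z \<partial>M\<bar> \<le> B"
  using prob_space.abs_integral_le_bound[OF M measurable_loss_slice loss_bounded] by blast

lemma integral_empirical_loss_ghost:
  assumes "w \<in> space Wsp"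
  shows "(\<integral>s. empirical_loss n loss s w \<partial>sample_space n M) = (\<integral>z. loss w z \<partial>M)"
  unfolding empirical_loss_def
proof (rule integral_sample_space_mean[OF M n_pos])
  show "integrable M (loss w)"
    using assms by (intro prob_space.integrable_bounded[OF M, where C = B] measurable_loss_slice loss_bounded)
qed

lemma measurable_integral_A:
  fixes f :: "'a \<Rightarrow> 'w \<Rightarrow> real"
  assumes "(\<lambda>(x, w). f x w) \<in> borel_measurable (N \<Otimes>\<^sub>M Wsp)" and "g \<in> N \<rightarrow>\<^sub>M sample_space n M"
  shows "(\<lambda>x. \<integral>w. f x w \<partial>A (g x)) \<in> borel_measurable N"
  using integral_measurable_subprob_algebra2[OF assms(1) measurable_prob_algebraD[OF measurable_compose[OF assms(2) A]]] .

lemma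
  fixes f :: "'w \<Rightarrow> real"
  assumes "s \<in> space (sample_space n M)" and "f \<in> borel_measurable Wsp"
    and "\<And>w. w \<in> space Wsp \<Longrightarrow> \<bar>f w\<bar> \<le> C"
  shows integrable_A: "integrable (A s) f" and abs_integral_A_le: "\<bar>\<integral>w. f w \<partial>A s\<bar> \<le> C"
proof -
  interpret prob_space "A s"
    using assms(1) by (rule prob_space_A)
  have "f \<in> borel_measurable (A s)" and "space (A s) = space Wsp"
    using assms(2) sets_A[OF assms(1)] by (auto cong: measurable_cong_sets dest: sets_eq_imp_space_eq)
  then show "integrable (A s) f" and "\<bar>\<integral>w. f w \<partial>A s\<bar> \<le> C"
    using assms(3) by (auto intro: integrable_bounded abs_integral_le_bound)
qed

lemma gen_error_ghost_sample:
  "gen_error n M A loss = (\<integral>p. \<integral>w. empirical_loss n loss (snd p) w - empirical_loss n loss (fst p) w \<partial>A (fst p)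
     \<partial>(sample_space n M \<Otimes>\<^sub>M sample_space n M))"
proof -
  let ?S = "sample_space n M"
  let ?pop = "\<lambda>w. \<integral>z. loss w z \<partial>M"
  let ?emp = "empirical_loss n loss"
  have S: "prob_space ?S"
    by (rule prob_space_sample_space[OF M])
  have gap_measurable:
    "(\<lambda>(p, w). ?emp (snd p) w - ?emp (fst p) w) \<in> borel_measurable ((?S \<Otimes>\<^sub>M ?S) \<Otimes>\<^sub>M Wsp)"
    by measurable
  have gap_bounded: "\<bar>?emp s' w - ?emp s w\<bar> \<le> 2 * B"
    if "s \<in> space ?S" "s' \<in> space ?S" "w \<in> space Wsp" for s s' w
    using empirical_loss_bounded[OF that(1,3)] empirical_loss_bounded[OF that(2,3)] by linarith
  have "(\<integral>p. \<integral>w. ?emp (snd p) w - ?emp (fst p) w \<partial>A (fst p) \<partial>(?S \<Otimes>\<^sub>M ?S))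
      = (\<integral>s. \<integral>s'. \<integral>w. ?emp s' w - ?emp s w \<partial>A s \<partial>?S \<partial>?S)"
  proof (rule integral_pair_bounded(1)[OF S S])
    show "(\<lambda>(s, s'). \<integral>w. ?emp s' w - ?emp s w \<partial>A s) \<in> borel_measurable (?S \<Otimes>\<^sub>M ?S)"
      using measurable_integral_A[OF gap_measurable measurable_fst] by (simp add: split_beta')
    show "\<bar>\<integral>w. ?emp s' w - ?emp s w \<partial>A s\<bar> \<le> 2 * B" if "s \<in> space ?S" "s' \<in> space ?S" for s s'
      using that gap_bounded by (intro abs_integral_A_le) (auto simp: sample_space_def)
  qed
  also have "\<dots> = (\<integral>s. (\<integral>w. ?pop w \<partial>A s) - (\<integral>w. ?emp s w \<partial>A s) \<partial>?S)"
  proof (rule Bochner_Integration.integral_cong[OF refl])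
    fix s assume s: "s \<in> space ?S"
    have space_A: "space (A s) = space Wsp"
      using sets_A[OF s] by (rule sets_eq_imp_space_eq)
    have "(\<lambda>(s', w). ?emp s' w - ?emp s w) \<in> borel_measurable (?S \<Otimes>\<^sub>M Wsp)"
      using s by measurable
    then have "(\<lambda>(s', w). ?emp s' w - ?emp s w) \<in> borel_measurable (?S \<Otimes>\<^sub>M A s)"
      by (simp cong: measurable_cong_sets add: sets_pair_measure_cong[OF refl sets_A[OF s]])
    then have "(\<integral>s'. \<integral>w. ?emp s' w - ?emp s w \<partial>A s \<partial>?S) = (\<integral>w. \<integral>s'. ?emp s' w - ?emp s w \<partial>?S \<partial>A s)"
      using gap_bounded s space_A by (intro integral_pair_bounded(2)[OF S prob_space_A[OF s]]) auto
    also have "\<dots> = (\<integral>w. ?pop w - ?emp s w \<partial>A s)"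
    proof (rule Bochner_Integration.integral_cong[OF refl])
      fix w assume "w \<in> space (A s)"
      then have w: "w \<in> space Wsp"
        by (simp add: space_A)
      have "integrable ?S (\<lambda>s'. ?emp s' w)"
        using empirical_loss_bounded w
        by (intro prob_space.integrable_bounded[OF S, where C = B])
           (simp_all add: measurable_compose[OF measurable_Pair[OF measurable_ident_sets[OF refl] measurable_const[OF w]] measurable_empirical_loss, simplified])
      then have "(\<integral>s'. ?emp s' w - ?emp s w \<partial>?S) = (\<integral>s'. ?emp s' w \<partial>?S) - (\<integral>s'. ?emp s w \<partial>?S)"
        by (rule Bochner_Integration.integral_diff[OF _ finite_measure.integrable_const[OF prob_space.finite_measure[OF S]]])
      then show "(\<integral>s'. ?emp s' w - ?emp s w \<partial>?S) = ?pop w - ?emp s w"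
        using integral_empirical_loss_ghost[OF w] prob_space.prob_space[OF S] by simp
    qed
    also have "\<dots> = (\<integral>w. ?pop w \<partial>A s) - (\<integral>w. ?emp s w \<partial>A s)"
      using s population_loss_bounded empirical_loss_bounded[OF s]
        measurable_compose[OF measurable_Pair[OF measurable_const[OF s] measurable_ident_sets[OF refl]] measurable_empirical_loss]
      by (intro Bochner_Integration.integral_diff integrable_A) simp_all
    finally show "(\<integral>s'. \<integral>w. ?emp s' w - ?emp s w \<partial>A s \<partial>?S) = (\<integral>w. ?pop w \<partial>A s) - (\<integral>w. ?emp s w \<partial>A s)" .
  qed
  also have "\<dots> = (\<integral>s. \<integral>w. ?pop w \<partial>A s \<partial>?S) - (\<integral>s. \<integral>w. ?emp s w \<partial>A s \<partial>?S)"
  proof (rule Bochner_Integration.integral_diff)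
    show "integrable ?S (\<lambda>s. \<integral>w. ?pop w \<partial>A s)"
      using population_loss_bounded
      by (intro prob_space.integrable_bounded[OF S, where C = B] measurable_integral_A abs_integral_A_le) auto
    show "integrable ?S (\<lambda>s. \<integral>w. ?emp s w \<partial>A s)"
      using empirical_loss_bounded
      by (intro prob_space.integrable_bounded[OF S, where C = B] measurable_integral_A abs_integral_A_le) auto
  qed
  also have "\<dots> = gen_error n M A loss"
    by (simp add: gen_error_def pop_risk_def emp_risk_def empirical_loss_def)
  finally show ?thesis ..
qed


lemma measurable_delta_loss:
  "i < n \<Longrightarrow> delta_loss loss i \<in> borel_measurable (super_space n M \<Otimes>\<^sub>M mask_space n \<Otimes>\<^sub>M Wsp)"
  unfolding delta_loss_def super_space_def by measurable

lemma measurable_mask_coord: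
  "i < n \<Longrightarrow> mask_coord i \<in> super_space n M \<Otimes>\<^sub>M mask_space n \<Otimes>\<^sub>M Wsp \<rightarrow>\<^sub>M count_space UNIV"
  unfolding mask_coord_def mask_space_def by measurable

lemma measurable_heldout_gap:
  "i < n \<Longrightarrow> heldout_gap loss i \<in> borel_measurable (super_space n M \<Otimes>\<^sub>M mask_space n \<Otimes>\<^sub>M Wsp)"
  unfolding heldout_gap_def delta_loss_def mask_coord_def super_space_def mask_space_def by measurable

lemma delta_loss_bounded:
  assumes "x \<in> space (super_space n M \<Otimes>\<^sub>M mask_space n \<Otimes>\<^sub>M Wsp)" and "i < n"
  shows "\<bar>delta_loss loss i x\<bar> \<le> 2 * B"
proof -
  obtain zt u w where x: "x = (zt, u, w)" and zt: "zt \<in> space (super_space n M)" and w: "w \<in> space Wsp"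
    using assms(1) by (auto simp: space_pair_measure)
  have "\<bar>loss w (zt (i, c))\<bar> \<le> B" for c
    using loss_bounded[OF w space_super_spaceD[OF zt assms(2)]] .
  then have "\<bar>loss w (zt (i, True)) - loss w (zt (i, False))\<bar> \<le> 2 * B"
    by (smt (verit))
  then show ?thesis
    by (simp add: x delta_loss_def)
qed

lemma heldout_gap_bounded:
  "x \<in> space (super_space n M \<Otimes>\<^sub>M mask_space n \<Otimes>\<^sub>M Wsp) \<Longrightarrow> i < n \<Longrightarrow> \<bar>heldout_gap loss i x\<bar> \<le> 2 * B"
  using delta_loss_bounded by (simp add: heldout_gap_def)

lemma measurable_mean_heldout_gap:
  "(\<lambda>x. (\<Sum>i<n. heldout_gap loss i x) / real n) \<in> borel_measurable (super_space n M \<Otimes>\<^sub>M mask_space n \<Otimes>\<^sub>M Wsp)"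
  using measurable_heldout_gap by (intro borel_measurable_divide borel_measurable_sum) auto

lemma mean_heldout_gap_bounded:
  assumes "x \<in> space (super_space n M \<Otimes>\<^sub>M mask_space n \<Otimes>\<^sub>M Wsp)"
  shows "\<bar>(\<Sum>i<n. heldout_gap loss i x) / real n\<bar> \<le> 2 * B"
proof -
  have "\<bar>\<Sum>i<n. heldout_gap loss i x\<bar> \<le> (\<Sum>i<n. 2 * B)"
    using heldout_gap_bounded[OF assms] by (intro order.trans[OF sum_abs sum_mono]) simp
  then show ?thesis
    using n_pos by (simp add: abs_divide divide_le_eq mult.commute)
qed

lemma measurable_supersample_kernel:
  "(\<lambda>(zt, u). distr (A (select n zt u)) (super_space n M \<Otimes>\<^sub>M mask_space n \<Otimes>\<^sub>M Wsp) (\<lambda>w. (zt, u, w)))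
     \<in> super_space n M \<Otimes>\<^sub>M mask_space n \<rightarrow>\<^sub>M prob_algebra (super_space n M \<Otimes>\<^sub>M mask_space n \<Otimes>\<^sub>M Wsp)"
  by measurable

lemma
  shows prob_space_supersample_joint: "prob_space (supersample_joint n M Wsp A)"
    and sets_supersample_joint:
      "sets (supersample_joint n M Wsp A) = sets (super_space n M \<Otimes>\<^sub>M mask_space n \<Otimes>\<^sub>M Wsp)"
proof -
  have "super_space n M \<Otimes>\<^sub>M mask_space n \<in> space (prob_algebra (super_space n M \<Otimes>\<^sub>M mask_space n))"
    by (simp add: space_prob_algebra prob_space_pair prob_space_super_space[OF M] prob_space_mask_space)
  then show "prob_space (supersample_joint n M Wsp A)"
    and "sets (supersample_joint n M Wsp A) = sets (super_space n M \<Otimes>\<^sub>M mask_space n \<Otimes>\<^sub>M Wsp)"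
    unfolding supersample_joint_def
    by (rule prob_space_bind'[OF _ measurable_supersample_kernel], rule sets_bind'[OF _ measurable_supersample_kernel])
qed

lemma integrable_supersample_joint:
  fixes f :: "(nat \<times> bool \<Rightarrow> 'z) \<times> (nat \<Rightarrow> bool) \<times> 'w \<Rightarrow> real"
  assumes "f \<in> borel_measurable (super_space n M \<Otimes>\<^sub>M mask_space n \<Otimes>\<^sub>M Wsp)"
    and "\<And>x. x \<in> space (super_space n M \<Otimes>\<^sub>M mask_space n \<Otimes>\<^sub>M Wsp) \<Longrightarrow> \<bar>f x\<bar> \<le> C"
  shows "integrable (supersample_joint n M Wsp A) f"
  using assms sets_eq_imp_space_eq[OF sets_supersample_joint]
  by (intro prob_space.integrable_bounded[OF prob_space_supersample_joint, where C = C])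
     (simp_all cong: measurable_cong_sets add: sets_supersample_joint)

lemma integral_supersample_joint:
  fixes f :: "(nat \<times> bool \<Rightarrow> 'z) \<times> (nat \<Rightarrow> bool) \<times> 'w \<Rightarrow> real"
  assumes "f \<in> borel_measurable (super_space n M \<Otimes>\<^sub>M mask_space n \<Otimes>\<^sub>M Wsp)"
    and "\<And>x. x \<in> space (super_space n M \<Otimes>\<^sub>M mask_space n \<Otimes>\<^sub>M Wsp) \<Longrightarrow> \<bar>f x\<bar> \<le> C"
  shows "(\<integral>x. f x \<partial>supersample_joint n M Wsp A)
    = (\<integral>x. \<integral>w. f (fst x, snd x, w) \<partial>A (select n (fst x) (snd x)) \<partial>(super_space n M \<Otimes>\<^sub>M mask_space n))"
proof -
  have "supersample_joint n M Wsp A = (super_space n M \<Otimes>\<^sub>M mask_space n) \<bind>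
      (\<lambda>x. distr (A (select n (fst x) (snd x))) (super_space n M \<Otimes>\<^sub>M mask_space n \<Otimes>\<^sub>M Wsp) (\<lambda>w. (fst x, snd x, w)))"
    by (simp add: supersample_joint_def split_beta')
  also have "(\<integral>x. f x \<partial>\<dots>)
    = (\<integral>x. \<integral>w. f (fst x, snd x, w) \<partial>A (select n (fst x) (snd x)) \<partial>(super_space n M \<Otimes>\<^sub>M mask_space n))"
    using assms
    by (intro integral_bind_distr_kernel prob_space_pair prob_space_super_space[OF M] prob_space_mask_space)
       (measurable, auto)
  finally show ?thesis .
qed


lemma distr_supersample_joint_mask_coord:
  assumes "i < n"
  shows "distr (supersample_joint n M Wsp A) (count_space UNIV) (mask_coord i) = measure_pmf (pmf_of_set UNIV)"
proof -
  let ?K = "super_space n M \<Otimes>\<^sub>M mask_space n"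
  let ?\<Omega> = "super_space n M \<Otimes>\<^sub>M mask_space n \<Otimes>\<^sub>M Wsp"
  have K: "prob_space ?K"
    by (intro prob_space_pair prob_space_super_space[OF M] prob_space_mask_space)
  note mask_coord = measurable_mask_coord[OF assms]
  have "distr (supersample_joint n M Wsp A) (count_space UNIV) (mask_coord i)
      = ?K \<bind> (\<lambda>(zt, u). distr (distr (A (select n zt u)) ?\<Omega> (\<lambda>w. (zt, u, w))) (count_space UNIV) (mask_coord i))"
    unfolding supersample_joint_def
    using measurable_prob_algebraD[OF measurable_supersample_kernel] prob_space.not_empty[OF K] mask_coord
    by (subst distr_bind) (auto simp: split_beta')
  also have "\<dots> = ?K \<bind> (\<lambda>x. return (count_space UNIV) (snd x i))"
  proof (rule bind_cong[OF refl])
    fix x assume "x \<in> space ?K"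
    then obtain zt u where x: "x = (zt, u)" and zt: "zt \<in> space (super_space n M)" and u: "u \<in> space (mask_space n)"
      by (auto simp: space_pair_measure)
    have s: "select n zt u \<in> space (sample_space n M)"
      using measurable_space[OF measurable_select] zt u by (auto simp: space_pair_measure)
    have "(\<lambda>w. (zt, u, w)) \<in> A (select n zt u) \<rightarrow>\<^sub>M ?\<Omega>"
      using zt u by (simp add: measurable_cong_sets[OF sets_A[OF s] refl])
    then have "distr (distr (A (select n zt u)) ?\<Omega> (\<lambda>w. (zt, u, w))) (count_space UNIV) (mask_coord i)
        = distr (A (select n zt u)) (count_space UNIV) (\<lambda>w. u i)"
      using mask_coord by (subst distr_distr) (auto simp: comp_def mask_coord_def)
    also have "\<dots> = return (count_space UNIV) (u i)"
      by (rule prob_space.distr_const[OF prob_space_A[OF s]]) simp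
    finally show "(case x of (zt, u) \<Rightarrow> distr (distr (A (select n zt u)) ?\<Omega> (\<lambda>w. (zt, u, w)))
        (count_space UNIV) (mask_coord i)) = return (count_space UNIV) (snd x i)"
      by (simp add: x)
  qed
  also have "\<dots> = distr ?K (count_space UNIV) (\<lambda>x. snd x i)"
    using prob_space.not_empty[OF K] assms
    by (intro bind_return_distr') (auto intro: measurable_compose[OF measurable_snd measurable_mask_component])
  also have "\<dots> = distr (distr ?K (mask_space n) snd) (count_space UNIV) (\<lambda>u. u i)"
    using assms by (subst distr_distr) (auto simp: comp_def intro: measurable_mask_component)
  also have "\<dots> = distr (mask_space n) (measure_pmf (pmf_of_set UNIV)) (\<lambda>u. u i)"
    unfolding distr_pair_snd[OF prob_space_super_space[OF M] prob_space_mask_space]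
    by (rule distr_cong[OF refl sets_measure_pmf_count_space[symmetric] refl])
  also have "\<dots> = measure_pmf (pmf_of_set UNIV)"
    unfolding mask_space_def using assms by (intro distr_PiM_component prob_space_measure_pmf) auto
  finally show ?thesis .
qed


lemma integral_mean_heldout_gap_fixed_mask:
  assumes u: "u \<in> space (mask_space n)"
  shows "(\<integral>zt. \<integral>w. (\<Sum>i<n. heldout_gap loss i (zt, u, w)) / real n \<partial>A (select n zt u) \<partial>super_space n M)
    = gen_error n M A loss"
proof -
  let ?S = "sample_space n M"
  let ?G = "\<lambda>zt. \<integral>w. (\<Sum>i<n. heldout_gap loss i (zt, u, w)) / real n \<partial>A (select n zt u)"
  have "(\<lambda>(zt, w). (zt, u, w)) \<in> super_space n M \<Otimes>\<^sub>M Wsp \<rightarrow>\<^sub>M super_space n M \<Otimes>\<^sub>M mask_space n \<Otimes>\<^sub>M Wsp"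
    using u by measurable
  then have "?G \<in> borel_measurable (super_space n M)"
    using measurable_compose[OF _ measurable_mean_heldout_gap]
    by (intro measurable_integral_A[OF _ measurable_select_mask]) (simp add: split_beta')
  then have "(\<integral>zt. ?G zt \<partial>super_space n M)
      = (\<integral>p. ?G (case p of (s, s') \<Rightarrow> interleave n u s s') \<partial>(?S \<Otimes>\<^sub>M ?S))"
    by (subst (1) distr_interleave[OF M, of n u, symmetric]) (rule integral_distr[OF measurable_interleave])
  also have "\<dots> = (\<integral>p. \<integral>w. empirical_loss n loss (snd p) w - empirical_loss n loss (fst p) w \<partial>A (fst p) \<partial>(?S \<Otimes>\<^sub>M ?S))"
  proof (rule Bochner_Integration.integral_cong[OF refl])
    fix p assume "p \<in> space (?S \<Otimes>\<^sub>M ?S)"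
    then have s: "fst p \<in> space ?S"
      by (auto simp: space_pair_measure)
    have "(\<Sum>i<n. heldout_gap loss i (interleave n u (fst p) (snd p), u, w)) / real n
        = empirical_loss n loss (snd p) w - empirical_loss n loss (fst p) w" for w
      by (simp add: heldout_gap_interleave empirical_loss_def sum_subtractf diff_divide_distrib)
    then show "?G (case p of (s, s') \<Rightarrow> interleave n u s s')
        = (\<integral>w. empirical_loss n loss (snd p) w - empirical_loss n loss (fst p) w \<partial>A (fst p))"
      by (simp add: split_beta' select_interleave[OF s])
  qed
  also have "\<dots> = gen_error n M A loss"
    by (rule gen_error_ghost_sample[symmetric])
  finally show ?thesis .
qed

lemma gen_error_eq_mean_heldout_gap:
  "gen_error n M A loss = (\<Sum>i<n. \<integral>x. heldout_gap loss i x \<partial>supersample_joint n M Wsp A) / real n"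
proof -
  let ?K = "super_space n M \<Otimes>\<^sub>M mask_space n"
  let ?\<Omega> = "super_space n M \<Otimes>\<^sub>M mask_space n \<Otimes>\<^sub>M Wsp"
  let ?J = "supersample_joint n M Wsp A"
  interpret J: prob_space ?J
    by (rule prob_space_supersample_joint)
  have integrable_gap: "integrable ?J (heldout_gap loss i)" if "i < n" for i
    using heldout_gap_bounded[OF _ that] by (rule integrable_supersample_joint[OF measurable_heldout_gap[OF that]])
  have "(\<Sum>i<n. \<integral>x. heldout_gap loss i x \<partial>?J) / real n = (\<integral>x. (\<Sum>i<n. heldout_gap loss i x) / real n \<partial>?J)"
    using integrable_gap by (simp add: Bochner_Integration.integral_sum)
  also have "\<dots> = (\<integral>x. \<integral>w. (\<Sum>i<n. heldout_gap loss i (fst x, snd x, w)) / real n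
      \<partial>A (select n (fst x) (snd x)) \<partial>?K)"
    by (rule integral_supersample_joint[OF measurable_mean_heldout_gap mean_heldout_gap_bounded])
  also have "\<dots> = (\<integral>u. \<integral>zt. \<integral>w. (\<Sum>i<n. heldout_gap loss i (zt, u, w)) / real n
      \<partial>A (select n zt u) \<partial>super_space n M \<partial>mask_space n)"
  proof -
    define H where "H zt u = (\<integral>w. (\<Sum>i<n. heldout_gap loss i (zt, u, w)) / real n \<partial>A (select n zt u))" for zt u
    have "(\<lambda>(x, w). (fst x, snd x, w)) \<in> ?K \<Otimes>\<^sub>M Wsp \<rightarrow>\<^sub>M ?\<Omega>"
      by measurable
    from measurable_compose[OF this measurable_mean_heldout_gap]
    have "(\<lambda>(zt, u). H zt u) \<in> borel_measurable ?K"
      unfolding H_def split_beta' using measurable_select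
      by (intro measurable_integral_A) (simp_all add: split_beta')
    moreover have "\<bar>H zt u\<bar> \<le> 2 * B" if "zt \<in> space (super_space n M)" "u \<in> space (mask_space n)" for zt u
      unfolding H_def
    proof (rule abs_integral_A_le)
      show "select n zt u \<in> space (sample_space n M)"
        using measurable_space[OF measurable_select, of "(zt, u)"] that by (simp add: space_pair_measure)
      have "(\<lambda>w. (zt, u, w)) \<in> Wsp \<rightarrow>\<^sub>M ?\<Omega>"
        using that by measurable
      from measurable_compose[OF this measurable_mean_heldout_gap]
      show "(\<lambda>w. (\<Sum>i<n. heldout_gap loss i (zt, u, w)) / real n) \<in> borel_measurable Wsp" .
      show "\<bar>(\<Sum>i<n. heldout_gap loss i (zt, u, w)) / real n\<bar> \<le> 2 * B" if "w \<in> space Wsp" for w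
        using that \<open>zt \<in> space (super_space n M)\<close> \<open>u \<in> space (mask_space n)\<close>
        by (intro mean_heldout_gap_bounded) (simp add: space_pair_measure)
    qed
    ultimately have "(\<integral>x. H (fst x) (snd x) \<partial>?K) = (\<integral>u. \<integral>zt. H zt u \<partial>super_space n M \<partial>mask_space n)"
      using integral_pair_bounded[OF prob_space_super_space[OF M] prob_space_mask_space, where f = H and C = "2 * B"]
      by simp
    then show ?thesis
      by (simp only: H_def)
  qed
  also have "\<dots> = (\<integral>u. gen_error n M A loss \<partial>mask_space n)"
    by (rule Bochner_Integration.integral_cong[OF refl integral_mean_heldout_gap_fixed_mask])
  also have "\<dots> = gen_error n M A loss"
    using prob_space.prob_space[OF prob_space_mask_space] by simp
  finally show ?thesis ..
qed

end

theorem theorem5: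
  fixes n :: nat and M :: "'z measure" and Wsp :: "'w measure"
    and A :: "(nat \<Rightarrow> 'z) \<Rightarrow> 'w measure" and loss :: "'w \<Rightarrow> 'z \<Rightarrow> real"
  assumes "n > 0"
    and "prob_space M"
    and "A \<in> measurable (sample_space n M) (prob_algebra Wsp)"
    and "(\<lambda>(w, z). loss w z) \<in> borel_measurable (Wsp \<Otimes>\<^sub>M M)"
    and "\<And>w z. w \<in> space Wsp \<Longrightarrow> z \<in> space M \<Longrightarrow> 0 \<le> loss w z \<and> loss w z \<le> 1"
  shows "ennreal \<bar>gen_error n M A loss\<bar> \<le>
    ennreal (1 / real n) *
    (\<Sum>i<n. \<integral>\<^sup>+ b. wasserstein1
        (distr (uniform_measure (supersample_joint n M Wsp A)
                  {x \<in> space (supersample_joint n M Wsp A). mask_coord i x = b})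
               borel (delta_loss loss i))
        (distr (supersample_joint n M Wsp A) borel (delta_loss loss i))
      \<partial>(distr (supersample_joint n M Wsp A) (count_space UNIV) (mask_coord i)))"
    (is "_ \<le> _ * (\<Sum>i<n. ?W i)")
proof -
  interpret supersample n M Wsp A loss 1
  proof (rule supersample.intro)
    show "\<bar>loss w z\<bar> \<le> 1" if "w \<in> space Wsp" and "z \<in> space M" for w z
      using assms(5)[OF that] by simp
  qed (fact assms)+
  let ?J = "supersample_joint n M Wsp A"
  let ?gap = "\<lambda>i. \<integral>x. heldout_gap loss i x \<partial>?J"
  have gap_le: "ennreal \<bar>?gap i\<bar> \<le> ?W i" if "i < n" for i
    unfolding heldout_gap_def
  proof (rule abs_integral_fair_sign_le_wasserstein1[OF prob_space_supersample_joint])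
    show "integrable ?J (delta_loss loss i)"
      using delta_loss_bounded[OF _ that] by (rule integrable_supersample_joint[OF measurable_delta_loss[OF that]])
    show "mask_coord i \<in> ?J \<rightarrow>\<^sub>M count_space UNIV"
      using measurable_mask_coord[OF that] unfolding measurable_cong_sets[OF sets_supersample_joint refl] .
    show "distr ?J (count_space UNIV) (mask_coord i) = measure_pmf (pmf_of_set UNIV)"
      by (rule distr_supersample_joint_mask_coord[OF that])
  qed
  have "\<bar>gen_error n M A loss\<bar> \<le> 1 / real n * (\<Sum>i<n. \<bar>?gap i\<bar>)"
    unfolding gen_error_eq_mean_heldout_gap using sum_abs[of ?gap "{..<n}"]
    by (simp add: abs_divide divide_right_mono)
  then have "ennreal \<bar>gen_error n M A loss\<bar> \<le> ennreal (1 / real n * (\<Sum>i<n. \<bar>?gap i\<bar>))"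
    by (rule ennreal_leI)
  also have "\<dots> = ennreal (1 / real n) * (\<Sum>i<n. ennreal \<bar>?gap i\<bar>)"
    by (subst ennreal_mult) (auto intro: sum_nonneg simp: sum_ennreal)
  also have "\<dots> \<le> ennreal (1 / real n) * (\<Sum>i<n. ?W i)"
    using gap_le by (intro mult_left_mono sum_mono) auto
  finally show ?thesis .
qed

end
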